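(* Let $G=(V,E)$ be a classical graph with vertex set $V=[n]$ and let $f\colon V \to \mathbb{C}^d$ be an orthogonal representation of $G$ in locally general position. Let $\phi\colon M_n\to M_d$ be given by $\phi(X) = \sum_{i=1}^n |f(i)\rangle\langle e_i| X |e_i\rangle\langle f(i)|$ for all $X\in M_n$ (an orthogonal representation of $\mathcal{S}_G=\operatorname{span}\{|e_i\rangle\langle e_j| : i=j\text{ or } i \text{ adjacent to } j\}$). Then $\phi$ is in locally general position.
   Context: $(|e_k\rangle)$ is the standard basis of $\mathbb{C}^n$. A classical orthogonal representation of $G$ is a map $f\colon V\to\mathbb{C}^d$ such that $f(i)\perp f(j)$ whenever $i\neq j$ and $i,j$ are not adjacent; it is in locally general position if for each fixed vertex, the vectors $f(j)$ representing the vertices $j$ nonadjacent to it are linearly independent. Elements $a,b$ of a $C^*$-algebra are orthogonal if $ab=ba=a^*b=ab^*=0$. For a quantum graph $\mathcal{S}\subseteq M_n$ (a subspace closed under adjoints containing $I_n$), a completely positive map $\phi\colon M_n\to M_d$ is an orthogonal representation of $\mathcal{S}$ if $\phi(A)\perp\phi(B)$ for all $A,B\in M_n$ with $A\mathcal{S}B=B\mathcal{S}A=A^*\mathcal{S}B=A\mathcal{S}B^*=\{0\}$. Such $\phi$ is in locally general position if for every nonzero projection $Q\in M_n$ and every projection $P\in M_n$ with $Q\mathcal{S}P=\{0\}$ one has $\operatorname{rank}(\phi(P))\ge\operatorname{rank}(P)$. *)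

theory Defs
  imports "Jordan_Normal_Form.Schur_Decomposition" "Jordan_Normal_Form.DL_Rank"
begin

definition simple_graph :: "nat \<Rightarrow> (nat \<Rightarrow> nat \<Rightarrow> bool) \<Rightarrow> bool" where
  "simple_graph n E \<longleftrightarrow> (\<forall>i<n. \<forall>j<n. E i j \<longleftrightarrow> E j i) \<and> (\<forall>i<n. \<not> E i i)"

definition orth_rep :: "nat \<Rightarrow> (nat \<Rightarrow> nat \<Rightarrow> bool) \<Rightarrow> nat \<Rightarrow> (nat \<Rightarrow> complex vec) \<Rightarrow> bool" where
  "orth_rep n E d f \<longleftrightarrow> (\<forall>i<n. f i \<in> carrier_vec d) \<and>
     (\<forall>i<n. \<forall>j<n. i \<noteq> j \<and> \<not> E i j \<longrightarrow> f i \<bullet>c f j = 0)"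

definition lin_indep_family :: "nat set \<Rightarrow> (nat \<Rightarrow> complex vec) \<Rightarrow> nat \<Rightarrow> bool" where
  "lin_indep_family J f d \<longleftrightarrow>
     (\<forall>c :: nat \<Rightarrow> complex. finsum_vec TYPE(complex) d (\<lambda>j. c j \<cdot>\<^sub>v f j) J = 0\<^sub>v d
        \<longrightarrow> (\<forall>j\<in>J. c j = 0))"

definition orth_rep_lgp :: "nat \<Rightarrow> (nat \<Rightarrow> nat \<Rightarrow> bool) \<Rightarrow> nat \<Rightarrow> (nat \<Rightarrow> complex vec) \<Rightarrow> bool" where
  "orth_rep_lgp n E d f \<longleftrightarrow> orth_rep n E d f \<and>
     (\<forall>i<n. lin_indep_family {j. j < n \<and> j \<noteq> i \<and> \<not> E i j} f d)"

text \<open>Quantum graph S_G = span{|e_i><e_j| : i = j or i ~ j}, i.e. the n x n matrices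
  supported on the diagonal and the edges.\<close>
definition S_G :: "nat \<Rightarrow> (nat \<Rightarrow> nat \<Rightarrow> bool) \<Rightarrow> complex mat set" where
  "S_G n E = {A \<in> carrier_mat n n. \<forall>i<n. \<forall>j<n. A $$ (i,j) \<noteq> 0 \<longrightarrow> i = j \<or> E i j}"

definition is_projection :: "nat \<Rightarrow> complex mat \<Rightarrow> bool" where
  "is_projection n P \<longleftrightarrow> P \<in> carrier_mat n n \<and> P * P = P \<and> mat_adjoint P = P"

text \<open>phi(X) = sum_i |f(i)><e_i| X |e_i><f(i)| = sum_i X_ii |f(i)><f(i)|.\<close>
definition phi_of :: "nat \<Rightarrow> nat \<Rightarrow> (nat \<Rightarrow> complex vec) \<Rightarrow> complex mat \<Rightarrow> complex mat" where
  "phi_of n d f X = mat d d (\<lambda>(a,b). \<Sum>i<n. (f i $ a) * X $$ (i,i) * cnj (f i $ b))"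

definition cp_lgp :: "nat \<Rightarrow> nat \<Rightarrow> complex mat set \<Rightarrow> (complex mat \<Rightarrow> complex mat) \<Rightarrow> bool" where
  "cp_lgp n d S phi \<longleftrightarrow>
     (\<forall>Q P. is_projection n Q \<and> Q \<noteq> 0\<^sub>m n n \<and> is_projection n P \<and>
            (\<forall>A\<in>S. Q * A * P = 0\<^sub>m n n)
        \<longrightarrow> vec_space.rank d (phi P) \<ge> vec_space.rank n P)"

end

theory Submission
  imports Defs
begin

(* Pick an entry Q a i \<noteq> 0 of Q.  For j = i or j adjacent to i the matrix unit |e_i><e_j| lies in
   S_G, and (Q |e_i><e_j| P) a b = Q a i * P j b, so row j of P vanishes.  Hence the diagonal support
   K of P consists of non-neighbours of i, on which f is linearly independent.  A projection has
   P j j = |P e_j|^2, so the columns of P outside K vanish and rank P \<le> |K|.  On the other hand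
   phi(P) = sum of P j j |f j><f j| over j in K with P j j > 0, so phi(P) y = 0 forces <f j, y> = 0
   for all j in K; thus phi(P) is injective on span {f j | j in K} and rank phi(P) \<ge> |K|. *)

context vec_space begin

lemma rank_le_rank_if_cols_subset_span:
  assumes A: "A \<in> carrier_mat n na" and B: "B \<in> carrier_mat n nb"
    and cols: "set (cols A) \<subseteq> span (set (cols B))"
  shows "rank A \<le> rank B"
proof -
  have sub_B: "VectorSpace.subspace class_ring (span (set (cols B))) V"
    using B cols_dim span_is_subspace by (metis carrier_matD(1))
  have sub_A: "VectorSpace.subspace class_ring (span (set (cols A))) V"
    using A cols_dim span_is_subspace by (metis carrier_matD(1))
  have "span (set (cols A)) \<subseteq> span (set (cols B))"
    using cols B by (metis carrier_matD(1) cols_dim span_is_submodule span_is_subset)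
  then have "VectorSpace.subspace class_ring (span (set (cols A))) (span_vs (set (cols B)))"
    using nested_subspaces[OF sub_B sub_A] by blast
  then show ?thesis
    unfolding rank_def
    using vectorspace.subspace_dim[OF subspace_is_vs[OF sub_B]] A B fin_dim_span_cols by auto
qed

lemma rank_mult_le_left:
  assumes B: "B \<in> carrier_mat n nb" and C: "C \<in> carrier_mat nb nc"
  shows "rank (B * C) \<le> rank B"
proof (rule rank_le_rank_if_cols_subset_span[OF mult_carrier_mat[OF B C] B], rule subsetI)
  fix x assume "x \<in> set (cols (B * C))"
  then obtain j where j: "j < nc" and x: "x = col (B * C) j"
    using B C by (metis cols_length cols_nth in_set_conv_nth carrier_matD(2) index_mult_mat(3))
  have "x \<in> col_space B"
    unfolding x col_mult2[OF B C j] col_space_eq[OF B] using B C j by auto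
  then show "x \<in> span (set (cols B))"
    unfolding col_space_def .
qed

lemma rank_eq_dim_col_if_mult_mat_vec_inj:
  assumes A: "A \<in> carrier_mat n m"
    and inj: "\<And>v. v \<in> carrier_vec m \<Longrightarrow> A *\<^sub>v v = 0\<^sub>v n \<Longrightarrow> v = 0\<^sub>v m"
  shows "rank A = m"
proof -
  have dist: "distinct (cols A)"
  proof (rule ccontr)
    assume "\<not> distinct (cols A)"
    then obtain i j where ij: "i < m" "j < m" "i \<noteq> j" "col A i = col A j"
      using A by (auto simp: distinct_conv_nth)
    define u :: "'a vec" where "u = unit_vec m i - unit_vec m j"
    have unit: "A *\<^sub>v unit_vec m k = col A k" if "k < m" for k
      using A that by (intro eq_vecI) auto
    have "A *\<^sub>v u = col A i - col A j"
      unfolding u_def using mult_minus_distrib_mat_vec[OF A] unit ij by simp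
    also have "\<dots> = 0\<^sub>v n"
      using A ij by simp
    finally have "u = 0\<^sub>v m"
      using inj[of u] by (simp add: u_def)
    then have "u $ i = 0"
      using ij by simp
    then show False
      using ij by (simp add: u_def)
  qed
  have "\<not> lin_dep (set (cols A))"
  proof
    assume "lin_dep (set (cols A))"
    then obtain v where "v \<in> carrier_vec m" "v \<noteq> 0\<^sub>v m" "A *\<^sub>v v = 0\<^sub>v n"
      using lin_depE[OF A _ dist] by blast
    then show False
      using inj by blast
  qed
  then show ?thesis
    using lin_indpt_full_rank[OF A dist] by blast
qed

lemma rank_ge_if_mult_mat_vec_inj:
  assumes A: "A \<in> carrier_mat n nc" and W: "W \<in> carrier_mat nc m"
    and inj: "\<And>x. x \<in> carrier_vec m \<Longrightarrow> A *\<^sub>v (W *\<^sub>v x) = 0\<^sub>v n \<Longrightarrow> x = 0\<^sub>v m"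
  shows "m \<le> rank A"
proof -
  have "rank (A * W) = m"
    using A W inj by (intro rank_eq_dim_col_if_mult_mat_vec_inj) auto
  then show ?thesis
    using rank_mult_le_left[OF A W] by simp
qed

lemma rank_le_card_if_cols_vanish:
  assumes A: "A \<in> carrier_mat n nc" and K: "K \<subseteq> {..<nc}"
    and vanish: "\<And>j. j < nc \<Longrightarrow> j \<notin> K \<Longrightarrow> col A j = 0\<^sub>v n"
  shows "rank A \<le> card K"
proof -
  have "finite K"
    using K finite_subset by blast
  then obtain h where h: "bij_betw h {0..<card K} K"
    using ex_bij_betw_nat_finite by blast
  define B where "B = mat n (card K) (\<lambda>(r, t). A $$ (r, h t))"
  have B_carrier: "B \<in> carrier_mat n (card K)"
    unfolding B_def by simp
  have "set (cols A) \<subseteq> span (set (cols B))"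
  proof
    fix x assume "x \<in> set (cols A)"
    then obtain j where j: "j < nc" and x: "x = col A j"
      using A by (auto simp: in_set_conv_nth)
    show "x \<in> span (set (cols B))"
    proof (cases "j \<in> K")
      case True
      then obtain t where t: "t < card K" and j_eq: "j = h t"
        using h by (metis atLeast0LessThan bij_betw_iff_bijections lessThan_iff)
      then have "x = col B t"
        using x A j j_eq unfolding B_def by (intro eq_vecI) auto
      then have "x \<in> set (cols B)"
        using t B_carrier by (metis carrier_matD(2) cols_length cols_nth nth_mem)
      then show ?thesis
        using B_carrier cols_dim span_mem by blast
    next
      case False
      then have "x = 0\<^sub>v n"
        using vanish j x by blast
      moreover have "set (cols B) \<subseteq> carrier_vec n"
        using B_carrier cols_dim by blast
      ultimately show ?thesis
        by (metis span_is_submodule submodule.zero_closed module_vec_simps(2))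
    qed
  qed
  then have "rank A \<le> rank B"
    by (rule rank_le_rank_if_cols_subset_span[OF A B_carrier])
  then show ?thesis
    using rank_le_nc[OF B_carrier] by linarith
qed

end

lemma finsum_smult_vec_eq_0_iff:
  fixes c :: "'b \<Rightarrow> 'a :: semiring_0"
  assumes J: "finite J" and f: "\<And>j. j \<in> J \<Longrightarrow> f j \<in> carrier_vec d"
  shows "finsum_vec TYPE('a) d (\<lambda>j. c j \<cdot>\<^sub>v f j) J = 0\<^sub>v d \<longleftrightarrow>
    (\<forall>b<d. (\<Sum>j\<in>J. c j * f j $ b) = 0)"
proof -
  let ?v = "finsum_vec TYPE('a) d (\<lambda>j. c j \<cdot>\<^sub>v f j) J"
  have closed: "(\<lambda>j. c j \<cdot>\<^sub>v f j) \<in> J \<rightarrow> carrier_vec d"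
    using f by auto
  have index: "?v $ b = (\<Sum>j\<in>J. c j * f j $ b)" if b: "b < d" for b
  proof -
    have "?v $ b = (\<Sum>j\<in>J. (c j \<cdot>\<^sub>v f j) $ b)"
      by (rule index_finsum_vec[OF J b closed])
    also have "\<dots> = (\<Sum>j\<in>J. c j * f j $ b)"
    proof (rule sum.cong[OF refl])
      fix j assume "j \<in> J"
      then have "dim_vec (f j) = d"
        using f carrier_vecD by blast
      then show "(c j \<cdot>\<^sub>v f j) $ b = c j * f j $ b"
        using b by simp
    qed
    finally show ?thesis .
  qed
  have "?v = 0\<^sub>v d \<longleftrightarrow> (\<forall>b<d. ?v $ b = 0)"
  proof
    show "\<forall>b<d. ?v $ b = 0" if "?v = 0\<^sub>v d"
      using that by simp
    show "?v = 0\<^sub>v d" if "\<forall>b<d. ?v $ b = 0"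
      using that finsum_vec_closed[OF closed] by (intro eq_vecI) auto
  qed
  then show ?thesis
    using index by simp
qed

lemma lin_indep_family_iff:
  assumes "finite J" and "\<And>j. j \<in> J \<Longrightarrow> f j \<in> carrier_vec d"
  shows "lin_indep_family J f d \<longleftrightarrow>
    (\<forall>c. (\<forall>b<d. (\<Sum>j\<in>J. c j * f j $ b) = 0) \<longrightarrow> (\<forall>j\<in>J. c j = 0))"
  by (simp add: lin_indep_family_def finsum_smult_vec_eq_0_iff[OF assms])

lemma lin_indep_family_comp:
  assumes indep: "lin_indep_family J f d"
    and J: "finite J" and f_carrier: "\<And>j. j \<in> J \<Longrightarrow> f j \<in> carrier_vec d"
    and h: "inj_on h I" "h ` I \<subseteq> J"
  shows "lin_indep_family I (f \<circ> h) d"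
proof -
  have I: "finite I"
    using finite_subset[OF h(2) J] finite_imageD h(1) by blast
  have carrier: "\<And>i. i \<in> I \<Longrightarrow> (f \<circ> h) i \<in> carrier_vec d"
    using f_carrier h(2) by auto
  have indep_I: "\<forall>i\<in>I. c i = 0" if sum_0: "\<forall>b<d. (\<Sum>i\<in>I. c i * f (h i) $ b) = 0" for c
  proof -
    define c' where "c' k = (if k \<in> h ` I then c (inv_into I h k) else 0)" for k
    have c'_h: "c' (h i) = c i" if "i \<in> I" for i
      using h(1) that by (simp add: c'_def)
    have "(\<Sum>j\<in>J. c' j * f j $ b) = 0" if "b < d" for b
    proof -
      have "(\<Sum>j\<in>J. c' j * f j $ b) = (\<Sum>k\<in>h ` I. c' k * f k $ b)"
        using J h(2) by (intro sum.mono_neutral_right) (auto simp: c'_def)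
      also have "\<dots> = (\<Sum>i\<in>I. c' (h i) * f (h i) $ b)"
        using sum.reindex[OF h(1)] by simp
      also have "\<dots> = (\<Sum>i\<in>I. c i * f (h i) $ b)"
        using c'_h by simp
      finally show ?thesis
        using sum_0 that by simp
    qed
    then have "\<forall>j\<in>J. c' j = 0"
      using indep lin_indep_family_iff[of J f d, OF J f_carrier] by blast
    then show ?thesis
      using h(2) c'_h by (metis image_subset_iff)
  qed
  have "\<forall>c. (\<forall>b<d. (\<Sum>i\<in>I. c i * (f \<circ> h) i $ b) = 0) \<longrightarrow> (\<forall>i\<in>I. c i = 0)"
    unfolding comp_def using indep_I by blast
  then show ?thesis
    using lin_indep_family_iff[of I "f \<circ> h" d, OF I carrier] by blast
qed

lemma mult_mat_vec_eq_0_if_lin_indep_family: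
  assumes indep: "lin_indep_family {..<m} g d" and g: "\<And>t. t < m \<Longrightarrow> g t \<in> carrier_vec d"
    and x: "x \<in> carrier_vec m" and zero: "mat d m (\<lambda>(b, t). g t $ b) *\<^sub>v x = 0\<^sub>v d"
  shows "x = 0\<^sub>v m"
proof -
  have "(\<Sum>t<m. x $ t * g t $ b) = 0" if b: "b < d" for b
  proof -
    have "(\<Sum>t<m. x $ t * g t $ b) = (\<Sum>t\<in>{0..<m}. g t $ b * x $ t)"
      by (simp add: atLeast0LessThan mult.commute)
    also have "\<dots> = (mat d m (\<lambda>(b, t). g t $ b) *\<^sub>v x) $ b"
      using x b by (simp add: scalar_prod_def)
    finally show ?thesis
      using zero b by simp
  qed
  moreover have "\<And>t. t \<in> {..<m} \<Longrightarrow> g t \<in> carrier_vec d"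
    using g by simp
  ultimately have "\<forall>t<m. x $ t = 0"
    using indep lin_indep_family_iff[of "{..<m}" g d] by blast
  then show ?thesis
    using x by (intro eq_vecI) auto
qed

lemma cscalar_prod_eq_sum:
  assumes "w \<in> carrier_vec d"
  shows "v \<bullet>c w = (\<Sum>b<d. v $ b * cnj (w $ b))"
  using assms by (simp add: scalar_prod_def atLeast0LessThan)

lemma projection_diag_eq_cscalar_col:
  assumes P: "is_projection n P" and j: "j < n"
  shows "P $$ (j, j) = col P j \<bullet>c col P j"
proof -
  have P_carrier: "P \<in> carrier_mat n n" and idem: "P * P = P" and herm: "mat_adjoint P = P"
    using P unfolding is_projection_def by auto
  have row_eq: "row P j = conjugate (col P j)"
  proof (rule eq_vecI)
    fix k assume "k < dim_vec (conjugate (col P j))"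
    then have k: "k < n"
      using P_carrier by simp
    have "row P j $ k = mat_adjoint P $$ (j, k)"
      using herm P_carrier j k by simp
    also have "\<dots> = conjugate (col P j) $ k"
      using P_carrier j k by (simp add: mat_adjoint_def mat_of_rows_def)
    finally show "row P j $ k = conjugate (col P j) $ k" .
  qed (use P_carrier in simp)
  have col_carrier: "col P j \<in> carrier_vec n"
    using P_carrier j by simp
  have "P $$ (j, j) = (P * P) $$ (j, j)"
    using idem by simp
  also have "\<dots> = conjugate (col P j) \<bullet> col P j"
    using P_carrier j row_eq by simp
  also have "\<dots> = col P j \<bullet>c col P j"
    using conjugate_vec_sprod_comm[OF col_carrier col_carrier] by simp
  finally show ?thesis .
qed

lemma projection_diag_nonneg:
  assumes "is_projection n P" and "j < n"
  shows "P $$ (j, j) \<ge> 0"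
  unfolding projection_diag_eq_cscalar_col[OF assms] by (rule conjugate_square_ge_0_vec)

lemma projection_col_eq_0_if_diag_eq_0:
  assumes P: "is_projection n P" and j: "j < n" and "P $$ (j, j) = 0"
  shows "col P j = 0\<^sub>v n"
proof -
  have "col P j \<in> carrier_vec n"
    using P j unfolding is_projection_def by simp
  moreover have "col P j \<bullet>c col P j = 0"
    using assms projection_diag_eq_cscalar_col[OF P j] by simp
  ultimately show ?thesis
    using conjugate_square_eq_0_vec by blast
qed

definition matrix_unit :: "nat \<Rightarrow> nat \<Rightarrow> nat \<Rightarrow> 'a :: zero_neq_one mat" where
  "matrix_unit n i j = mat n n (\<lambda>(r, c). if r = i \<and> c = j then 1 else 0)"

lemma matrix_unit_mem_S_G:
  assumes "i < n" and "j < n" and "i = j \<or> E i j"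
  shows "matrix_unit n i j \<in> S_G n E"
  using assms unfolding S_G_def matrix_unit_def by auto

lemma mult_matrix_unit_mult_index:
  fixes Q P :: "'a :: comm_ring_1 mat"
  assumes Q: "Q \<in> carrier_mat n n" and P: "P \<in> carrier_mat n n"
    and "a < n" "b < n" "i < n" "j < n"
  shows "(Q * matrix_unit n i j * P) $$ (a, b) = Q $$ (a, i) * P $$ (j, b)"
proof -
  have QU: "Q * matrix_unit n i j = mat n n (\<lambda>(r, c). if c = j then Q $$ (r, i) else 0)"
  proof (rule eq_matI)
    fix r c assume "r < dim_row (mat n n (\<lambda>(r, c). if c = j then Q $$ (r, i) else 0))"
      and "c < dim_col (mat n n (\<lambda>(r, c). if c = j then Q $$ (r, i) else 0))"
    then have rc: "r < n" "c < n"
      by auto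
    have "(Q * matrix_unit n i j) $$ (r, c) = (\<Sum>k\<in>{0..<n}. Q $$ (r, k) * (if k = i \<and> c = j then 1 else 0))"
      using Q rc by (simp add: matrix_unit_def scalar_prod_def)
    also have "\<dots> = (if c = j then Q $$ (r, i) else 0)"
      using assms by (simp add: if_distrib[of "(*) _"] cong: if_cong)
    finally show "(Q * matrix_unit n i j) $$ (r, c) = mat n n (\<lambda>(r, c). if c = j then Q $$ (r, i) else 0) $$ (r, c)"
      using rc by simp
  qed (use Q in \<open>auto simp: matrix_unit_def\<close>)
  have "(Q * matrix_unit n i j * P) $$ (a, b) = (\<Sum>c\<in>{0..<n}. (if c = j then Q $$ (a, i) else 0) * P $$ (c, b))"
    using P assms by (simp add: QU scalar_prod_def)
  also have "\<dots> = Q $$ (a, i) * P $$ (j, b)"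
    using assms by (simp add: if_distrib[of "\<lambda>x. x * _"] cong: if_cong)
  finally show ?thesis .
qed

lemma diag_support_nonadjacent_if_annihilated:
  assumes Q: "Q \<in> carrier_mat n n" "Q \<noteq> 0\<^sub>m n n" and P: "P \<in> carrier_mat n n"
    and annihilated: "\<forall>A\<in>S_G n E. Q * A * P = 0\<^sub>m n n"
  obtains i where "i < n" and "{j. j < n \<and> P $$ (j, j) \<noteq> 0} \<subseteq> {j. j < n \<and> j \<noteq> i \<and> \<not> E i j}"
proof -
  obtain a i where a: "a < n" and i: "i < n" and Q_ai: "Q $$ (a, i) \<noteq> 0"
    using Q by (metis eq_matI carrier_matD index_zero_mat(1,2,3))
  have "P $$ (j, j) = 0" if j: "j < n" and adjacent: "i = j \<or> E i j" for j
  proof -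
    have "Q * matrix_unit n i j * P = 0\<^sub>m n n"
      using annihilated matrix_unit_mem_S_G[of i n j E, OF i j adjacent] by blast
    then have "Q $$ (a, i) * P $$ (j, j) = 0"
      using mult_matrix_unit_mult_index[OF Q(1) P a j i j] a j by simp
    then show ?thesis
      using Q_ai by simp
  qed
  then show ?thesis
    using that i by blast
qed

lemma phi_of_carrier: "phi_of n d f X \<in> carrier_mat d d"
  unfolding phi_of_def by simp

lemma phi_of_mult_vec_index:
  assumes f: "\<And>i. i < n \<Longrightarrow> f i \<in> carrier_vec d" and y: "y \<in> carrier_vec d" and a: "a < d"
  shows "(phi_of n d f X *\<^sub>v y) $ a = (\<Sum>i<n. X $$ (i, i) * (y \<bullet>c f i) * f i $ a)"
proof -
  have "(phi_of n d f X *\<^sub>v y) $ a = (\<Sum>b<d. (\<Sum>i<n. f i $ a * X $$ (i, i) * cnj (f i $ b)) * y $ b)"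
    using y a by (simp add: phi_of_def scalar_prod_def atLeast0LessThan)
  also have "\<dots> = (\<Sum>i<n. \<Sum>b<d. X $$ (i, i) * (y $ b * cnj (f i $ b)) * f i $ a)"
    unfolding sum_distrib_right by (subst sum.swap) (simp add: mult_ac)
  also have "\<dots> = (\<Sum>i<n. X $$ (i, i) * (y \<bullet>c f i) * f i $ a)"
  proof (rule sum.cong[OF refl])
    fix i assume "i \<in> {..<n}"
    then have "y \<bullet>c f i = (\<Sum>b<d. y $ b * cnj (f i $ b))"
      using f cscalar_prod_eq_sum by simp
    then show "(\<Sum>b<d. X $$ (i, i) * (y $ b * cnj (f i $ b)) * f i $ a) =
        X $$ (i, i) * (y \<bullet>c f i) * f i $ a"
      by (simp add: sum_distrib_left sum_distrib_right)
  qed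
  finally show ?thesis .
qed

lemma phi_of_quadratic_form:
  assumes f: "\<And>i. i < n \<Longrightarrow> f i \<in> carrier_vec d" and y: "y \<in> carrier_vec d"
  shows "(phi_of n d f X *\<^sub>v y) \<bullet>c y = (\<Sum>i<n. X $$ (i, i) * (cnj (f i \<bullet>c y) * (f i \<bullet>c y)))"
proof -
  have conj: "y \<bullet>c f i = cnj (f i \<bullet>c y)" if "i < n" for i
    using f[OF that] y by (simp add: cscalar_prod_eq_sum cnj_sum mult.commute)
  have "(phi_of n d f X *\<^sub>v y) \<bullet>c y = (\<Sum>a<d. (phi_of n d f X *\<^sub>v y) $ a * cnj (y $ a))"
    by (rule cscalar_prod_eq_sum[OF y])
  also have "\<dots> = (\<Sum>a<d. \<Sum>i<n. X $$ (i, i) * (y \<bullet>c f i) * (f i $ a * cnj (y $ a)))"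
    by (rule sum.cong[OF refl]) (simp add: phi_of_mult_vec_index[where n = n and f = f, OF f y] sum_distrib_left sum_distrib_right mult_ac)
  also have "\<dots> = (\<Sum>i<n. X $$ (i, i) * (y \<bullet>c f i) * (f i \<bullet>c y))"
    by (subst sum.swap) (rule sum.cong[OF refl], simp add: cscalar_prod_eq_sum[OF y] sum_distrib_left)
  also have "\<dots> = (\<Sum>i<n. X $$ (i, i) * (cnj (f i \<bullet>c y) * (f i \<bullet>c y)))"
    by (rule sum.cong[OF refl]) (simp add: conj mult_ac)
  finally show ?thesis .
qed

lemma phi_of_kernel_orthogonal:
  assumes f: "\<And>i. i < n \<Longrightarrow> f i \<in> carrier_vec d" and y: "y \<in> carrier_vec d"
    and diag: "\<And>i. i < n \<Longrightarrow> X $$ (i, i) \<ge> 0"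
    and kernel: "phi_of n d f X *\<^sub>v y = 0\<^sub>v d"
    and i: "i < n" and X_ii: "X $$ (i, i) \<noteq> 0"
  shows "f i \<bullet>c y = 0"
proof -
  define z where "z k = f k \<bullet>c y" for k
  have nonneg: "X $$ (k, k) * (cnj (z k) * z k) \<ge> 0" if "k \<in> {..<n}" for k
  proof -
    have "0 \<le> z k * cnj (z k)"
      using conjugate_square_positive[of "z k"] by simp
    then show ?thesis
      using diag[of k] that by (simp add: mult_nonneg_nonneg mult.commute)
  qed
  have "(\<Sum>k<n. X $$ (k, k) * (cnj (z k) * z k)) = (phi_of n d f X *\<^sub>v y) \<bullet>c y"
    by (simp add: z_def phi_of_quadratic_form[where n = n and f = f, OF f y])
  also have "\<dots> = 0"
    using kernel y by simp
  finally have "X $$ (i, i) * (cnj (z i) * z i) = 0"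
    using sum_nonneg_eq_0_iff[of "{..<n}" "\<lambda>k. X $$ (k, k) * (cnj (z k) * z k)"] nonneg i by simp
  then show ?thesis
    using X_ii by (simp add: z_def)
qed

lemma rank_projection_le_card_diag_support:
  assumes P: "is_projection n P"
  shows "vec_space.rank n P \<le> card {j. j < n \<and> P $$ (j, j) \<noteq> 0}"
proof (rule vec_space.rank_le_card_if_cols_vanish)
  show "P \<in> carrier_mat n n"
    using P unfolding is_projection_def by simp
  show "{j. j < n \<and> P $$ (j, j) \<noteq> 0} \<subseteq> {..<n}"
    by auto
  show "col P j = 0\<^sub>v n" if "j < n" and "j \<notin> {j. j < n \<and> P $$ (j, j) \<noteq> 0}" for j
    using projection_col_eq_0_if_diag_eq_0[OF P] that by simp
qed

lemma phi_of_kernel_meets_support_span_trivially: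
  assumes f: "\<And>i. i < n \<Longrightarrow> f i \<in> carrier_vec d"
    and diag: "\<And>i. i < n \<Longrightarrow> X $$ (i, i) \<ge> 0"
    and support: "\<And>t. t < m \<Longrightarrow> h t < n \<and> X $$ (h t, h t) \<noteq> 0"
    and x: "x \<in> carrier_vec m"
    and kernel: "phi_of n d f X *\<^sub>v (mat d m (\<lambda>(b, t). f (h t) $ b) *\<^sub>v x) = 0\<^sub>v d"
  shows "mat d m (\<lambda>(b, t). f (h t) $ b) *\<^sub>v x = 0\<^sub>v d"
proof -
  define V where "V = mat d m (\<lambda>(b, t). f (h t) $ b)"
  define y where "y = V *\<^sub>v x"
  have V: "V \<in> carrier_mat d m"
    unfolding V_def by simp
  have y: "y \<in> carrier_vec d"
    using V x unfolding y_def by simp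
  have "transpose_mat V *\<^sub>v conjugate y = 0\<^sub>v m"
  proof (rule eq_vecI)
    fix t assume "t < dim_vec (0\<^sub>v m)"
    then have t: "t < m"
      by simp
    have "f (h t) \<in> carrier_vec d"
      using f support[OF t] by simp
    then have "col V t = f (h t)"
      using t unfolding V_def by (intro eq_vecI) auto
    moreover have "f (h t) \<bullet>c y = 0"
      using phi_of_kernel_orthogonal[where n = n and f = f and X = X, OF f y diag]
        kernel support[OF t] unfolding y_def V_def by blast
    ultimately show "(transpose_mat V *\<^sub>v conjugate y) $ t = 0\<^sub>v m $ t"
      using V t by simp
  qed (use V in simp)
  then have "y \<bullet>c y = 0"
    using transpose_vec_mult_scalar[OF V x, of "conjugate y"] comm_scalar_prod[of y d "conjugate y"] y x
    unfolding y_def by simp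
  then show ?thesis
    using conjugate_square_eq_0_vec[OF y] unfolding y_def V_def by blast
qed

lemma rank_phi_of_ge_card_diag_support:
  assumes f: "\<And>i. i < n \<Longrightarrow> f i \<in> carrier_vec d"
    and diag: "\<And>i. i < n \<Longrightarrow> X $$ (i, i) \<ge> 0"
    and indep: "lin_indep_family {i. i < n \<and> X $$ (i, i) \<noteq> 0} f d"
  shows "card {i. i < n \<and> X $$ (i, i) \<noteq> 0} \<le> vec_space.rank d (phi_of n d f X)"
proof -
  define K where "K = {i. i < n \<and> X $$ (i, i) \<noteq> 0}"
  define m where "m = card K"
  have "finite K"
    unfolding K_def by simp
  then obtain h where h: "bij_betw h {..<m} K"
    using ex_bij_betw_nat_finite unfolding m_def atLeast0LessThan by blast
  have support: "h t < n \<and> X $$ (h t, h t) \<noteq> 0" if "t < m" for t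
    using h that unfolding K_def by (auto simp: bij_betw_def)
  have indep_h: "lin_indep_family {..<m} (f \<circ> h) d"
    using lin_indep_family_comp[of K f d h "{..<m}"] indep f h
    unfolding K_def bij_betw_def by auto
  have "m \<le> vec_space.rank d (phi_of n d f X)"
  proof (rule vec_space.rank_ge_if_mult_mat_vec_inj[OF phi_of_carrier mat_carrier])
    fix x assume x: "x \<in> carrier_vec m"
      and "phi_of n d f X *\<^sub>v (mat d m (\<lambda>(b, t). f (h t) $ b) *\<^sub>v x) = 0\<^sub>v d"
    then have "mat d m (\<lambda>(b, t). (f \<circ> h) t $ b) *\<^sub>v x = 0\<^sub>v d"
      using phi_of_kernel_meets_support_span_trivially[where n = n and f = f and X = X, OF f diag]
        support by simp
    then show "x = 0\<^sub>v m"
      using mult_mat_vec_eq_0_if_lin_indep_family[of m "f \<circ> h" d x] indep_h f support x by simp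
  qed
  then show ?thesis
    unfolding m_def K_def .
qed

theorem proposition5p8:
  fixes n d :: nat and E :: "nat \<Rightarrow> nat \<Rightarrow> bool" and f :: "nat \<Rightarrow> complex vec"
  assumes "simple_graph n E"
    and "orth_rep_lgp n E d f"
  shows "cp_lgp n d (S_G n E) (phi_of n d f)"
  unfolding cp_lgp_def
proof (intro allI impI, elim conjE)
  fix Q P
  assume Q: "is_projection n Q" "Q \<noteq> 0\<^sub>m n n" and P: "is_projection n P"
    and annihilated: "\<forall>A\<in>S_G n E. Q * A * P = 0\<^sub>m n n"
  have f: "\<And>i. i < n \<Longrightarrow> f i \<in> carrier_vec d"
    and indep: "\<And>i. i < n \<Longrightarrow> lin_indep_family {j. j < n \<and> j \<noteq> i \<and> \<not> E i j} f d"
    using assms(2) unfolding orth_rep_lgp_def orth_rep_def by auto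
  define K where "K = {j. j < n \<and> P $$ (j, j) \<noteq> 0}"
  obtain i where "i < n" and K_nonadjacent: "K \<subseteq> {j. j < n \<and> j \<noteq> i \<and> \<not> E i j}"
    using diag_support_nonadjacent_if_annihilated[of Q n P E] Q P annihilated
    unfolding is_projection_def K_def by blast
  have "lin_indep_family K f d"
    using lin_indep_family_comp[of "{j. j < n \<and> j \<noteq> i \<and> \<not> E i j}" f d id K]
      indep[OF \<open>i < n\<close>] f K_nonadjacent by auto
  then have "card K \<le> vec_space.rank d (phi_of n d f P)"
    using rank_phi_of_ge_card_diag_support[where n = n and f = f and X = P, OF f]
      projection_diag_nonneg[OF P] unfolding K_def by blast
  moreover have "vec_space.rank n P \<le> card K"
    using rank_projection_le_card_diag_support[OF P] unfolding K_def .
  ultimately show "vec_space.rank n P \<le> vec_space.rank d (phi_of n d f P)"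
    by linarith
qed

end
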